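(* Let $f\in\mathcal{R}$ with $f(z)=z+\sum_{n=2}^\infty a_nz^n$ and local inverse $f^{-1}(w)=w+\sum_{n\ge2}A_nw^n$, so $A_2=-a_2$, $A_3=-a_3+2a_2^2$. Then \[ -\frac{1}{\sqrt3}\le|A_3|-|A_2|\le\frac23, \] and both inequalities are sharp.
   Context: $\mathbb{D}$ is the open unit disk; $\mathcal{A}$ is the class of holomorphic $f$ on $\mathbb{D}$ with $f(0)=0$, $f'(0)=1$; $\mathcal{R}=\{f\in\mathcal{A}:\operatorname{Re} f'(z)>0\ \forall z\in\mathbb{D}\}$. *)

theory Defs
  imports "HOL-Analysis.Analysis"
begin

definition classR :: "(complex \<Rightarrow> complex) \<Rightarrow> bool" where
  "classR f \<longleftrightarrow> f holomorphic_on ball 0 1 \<and> f 0 = 0 \<and> deriv f 0 = 1 \<and>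
     (\<forall>z\<in>ball 0 1. Re (deriv f z) > 0)"

definition taylor_coeff :: "(complex \<Rightarrow> complex) \<Rightarrow> nat \<Rightarrow> complex" where
  "taylor_coeff f n = (deriv ^^ n) f 0 / of_nat (fact n)"

text \<open>Coefficients A_2, A_3 of the local inverse, as given in the statement.\<close>
definition invA2 :: "(complex \<Rightarrow> complex) \<Rightarrow> complex" where
  "invA2 f = - taylor_coeff f 2"

definition invA3 :: "(complex \<Rightarrow> complex) \<Rightarrow> complex" where
  "invA3 f = - taylor_coeff f 3 + 2 * (taylor_coeff f 2)^2"

end

theory Submission
  imports Defs "HOL-Complex_Analysis.Complex_Analysis"
begin

(*
  For f in R the function w = (f' - 1) / (f' + 1) is a Schwarz function, w(z) = c1 z + c2 z^2 + ...,
  and conversely every Schwarz function arises in this way (integrate (1 + w) / (1 - w)).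
  Comparing coefficients in f' = (1 + w) / (1 - w) gives a2 = c1 and a3 = 2 (c2 + c1^2) / 3, hence
  A2 = -c1 and A3 = (4 c1^2 - 2 c2) / 3. The Schwarz-Pick inequality at 0, applied to w(z) / z,
  gives |c2| <= 1 - |c1|^2; under this constraint the triangle inequality and an elementary
  quadratic estimate in |c1| bound |A3| - |A2| between -1/sqrt 3 and 2/3. The bounds are attained
  for w(z) = z^2 and for w(z) = z (z + c) / (1 + c z) with c = 1/sqrt 3.
*)

lemma taylor_coeff_0 [simp]: "taylor_coeff f 0 = f 0"
  by (simp add: taylor_coeff_def)

lemma taylor_coeff_eq_fps_nth:
  assumes "f has_fps_expansion F"
  shows "taylor_coeff f n = fps_nth F n"
  using fps_nth_fps_expansion[OF assms] by (simp add: taylor_coeff_def)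

lemma eventually_nhds_0_of_unit_ball:
  assumes "\<And>z. norm z < 1 \<Longrightarrow> P z"
  shows "eventually P (nhds (0::complex))"
  using eventually_nhds_in_open[of "ball 0 1" 0] by (rule eventually_mono) (simp_all add: assms)

lemma taylor_coeff_cong:
  assumes "eventually (\<lambda>z. f z = g z) (nhds 0)"
  shows "taylor_coeff f n = taylor_coeff g n"
  unfolding taylor_coeff_def using higher_deriv_cong_ev[OF assms refl] by simp

lemma taylor_coeffs_of_times_z:
  assumes hol: "g holomorphic_on ball 0 1" and w: "\<And>z. norm z < 1 \<Longrightarrow> w z = z * g z"
  shows "taylor_coeff w 1 = g 0" and "taylor_coeff w 2 = deriv g 0"
proof -
  have G: "g has_fps_expansion fps_expansion g 0"
    using hol by (intro has_fps_expansion_fps_expansion) auto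
  have ev: "eventually (\<lambda>z. z * g z = w z) (nhds 0)"
    by (rule eventually_nhds_0_of_unit_ball) (simp add: w)
  have "(\<lambda>z. z * g z) has_fps_expansion fps_X * fps_expansion g 0"
    by (intro fps_expansion_intros G)
  then have "w has_fps_expansion fps_X * fps_expansion g 0"
    using has_fps_expansion_cong[OF ev refl] by blast
  then have "taylor_coeff w (n + 1) = taylor_coeff g n" for n
    by (simp add: taylor_coeff_eq_fps_nth[OF G] taylor_coeff_eq_fps_nth)
  from this[of 0] this[of 1] show "taylor_coeff w 1 = g 0" "taylor_coeff w 2 = deriv g 0"
    by (simp_all add: taylor_coeff_def numeral_2_eq_2)
qed

lemma fps_cayley_coeffs:
  fixes P W :: "'a :: field_char_0 fps"
  assumes eq: "W * (P + 1) = P - 1" and P0: "fps_nth P 0 = 1"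
  shows "fps_nth P 1 = 2 * fps_nth W 1" and "fps_nth P 2 = 2 * fps_nth W 2 + 2 * (fps_nth W 1)^2"
proof -
  have coeff: "fps_nth (W * (P + 1)) n = fps_nth (P - 1) n" for n
    using eq by simp
  have W0: "fps_nth W 0 = 0"
    using coeff[of 0] P0 by simp
  show P1: "fps_nth P 1 = 2 * fps_nth W 1"
    using coeff[of 1] W0 P0 by (simp add: fps_mult_nth_1 mult.commute)
  have "fps_nth P 2 = 2 * fps_nth W 2 + fps_nth W 1 * fps_nth P 1"
    using coeff[of 2] W0 P0 by (simp add: fps_mult_nth numeral_2_eq_2 algebra_simps)
  with P1 show "fps_nth P 2 = 2 * fps_nth W 2 + 2 * (fps_nth W 1)^2"
    by (simp add: power2_eq_square)
qed

lemma one_minus_cnj_mult_self: "1 - cnj a * a = complex_of_real (1 - (norm a)^2)"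
  by (simp add: complex_norm_square mult.commute del: of_real_power)

lemma Moebius_function_has_field_derivative:
  assumes "norm a < 1" "norm z < 1"
  shows "(Moebius_function 0 a has_field_derivative (1 - cnj a * a) / (1 - cnj a * z)^2) (at z)"
proof -
  have "norm (cnj a * z) < 1"
    using norm_mult_less[of "cnj a" 1 z 1] assms by simp
  then have nz: "1 - cnj a * z \<noteq> 0"
    by auto
  have "((\<lambda>z. (z - a) / (1 - cnj a * z)) has_field_derivative (1 - cnj a * a) / (1 - cnj a * z)^2) (at z)"
    using nz by (auto intro!: derivative_eq_intros simp: power2_eq_square field_simps)
  then show ?thesis
    by (simp add: Moebius_function_simple[abs_def])
qed

lemma Schwarz_Pick_at_0:
  assumes hol: "g holomorphic_on ball 0 1" and lt: "\<And>z. norm z < 1 \<Longrightarrow> norm (g z) < 1"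
  shows "norm (deriv g 0) \<le> 1 - (norm (g 0))^2"
proof -
  define a where "a = g 0"
  have a: "norm a < 1"
    using lt[of 0] by (simp add: a_def)
  define h where "h = Moebius_function 0 a \<circ> g"
  have "norm (deriv h 0) \<le> 1"
  proof (rule Schwarz_Lemma(2)[where \<xi>=0])
    have "Moebius_function 0 a holomorphic_on g ` ball 0 1"
      using Moebius_function_holomorphic[OF a] by (rule holomorphic_on_subset) (auto simp: lt)
    then show "h holomorphic_on ball 0 1"
      unfolding h_def by (rule holomorphic_on_compose[OF hol])
    show "h 0 = 0"
      by (simp add: h_def a_def Moebius_function_eq_zero)
    show "norm (h z) < 1" if "norm z < 1" for z
      using Moebius_function_norm_lt_1[OF a lt[OF that]] by (simp add: h_def)
  qed simp
  have "(g has_field_derivative deriv g 0) (at 0)"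
    using hol by (intro holomorphic_derivI[of g "ball 0 1"]) auto
  then have "(h has_field_derivative (1 - cnj a * a) / (1 - cnj a * a)^2 * deriv g 0) (at 0)"
    unfolding h_def using Moebius_function_has_field_derivative[OF a a] by (intro DERIV_chain) (simp add: a_def)
  moreover have pos: "0 < 1 - (norm a)^2"
    using a by (simp add: abs_square_less_1)
  then have "(1 - cnj a * a) / (1 - cnj a * a)^2 * deriv g 0 = deriv g 0 / complex_of_real (1 - (norm a)^2)"
    unfolding one_minus_cnj_mult_self by (simp add: power2_eq_square)
  ultimately have "deriv h 0 = deriv g 0 / complex_of_real (1 - (norm a)^2)"
    by (metis DERIV_imp_deriv)
  then have "norm (deriv h 0) = norm (deriv g 0) / (1 - (norm a)^2)"
    using pos by (simp only: norm_divide norm_of_real abs_of_pos)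
  with pos \<open>norm (deriv h 0) \<le> 1\<close> show ?thesis
    by (simp add: a_def divide_le_eq)
qed

definition schwarz_function :: "(complex \<Rightarrow> complex) \<Rightarrow> bool" where
  "schwarz_function w \<longleftrightarrow> w holomorphic_on ball 0 1 \<and> w 0 = 0 \<and> (\<forall>z\<in>ball 0 1. norm (w z) < 1)"

lemma schwarz_function_coeff_bound:
  assumes "schwarz_function w"
  shows "norm (taylor_coeff w 2) \<le> 1 - (norm (taylor_coeff w 1))^2"
proof -
  have hol: "w holomorphic_on ball 0 1" and w0: "w 0 = 0" and lt: "\<And>z. norm z < 1 \<Longrightarrow> norm (w z) < 1"
    using assms by (auto simp: schwarz_function_def)
  show ?thesis
  proof (cases "\<exists>\<alpha>. (\<forall>z. norm z < 1 \<longrightarrow> w z = \<alpha> * z) \<and> norm \<alpha> = 1")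
    case True
    then obtain \<alpha> where w: "\<And>z. norm z < 1 \<Longrightarrow> w z = z * (\<lambda>_. \<alpha>) z" and "norm \<alpha> = 1"
      by (auto simp: mult.commute)
    then show ?thesis
      using taylor_coeffs_of_times_z[of "\<lambda>_. \<alpha>"] by simp
  next
    case False
    \<comment> \<open>By the equality case of Schwarz's lemma, \<open>w(z)/z\<close> then maps the disc into itself.\<close>
    then have no_rotation: "\<not> (\<exists>z. norm z < 1 \<and> z \<noteq> 0 \<and> norm (w z) = norm z)" "norm (deriv w 0) \<noteq> 1"
      using Schwarz_Lemma(3)[OF hol w0 lt, of 0] by auto
    obtain g where holg: "g holomorphic_on ball 0 1" and wg: "\<And>z. norm z < 1 \<Longrightarrow> w z = z * g z"
      and g0: "deriv w 0 = g 0"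
      using Schwarz3[OF hol w0] by blast
    have "norm (g z) < 1" if z: "norm z < 1" for z
    proof (cases "z = 0")
      case True
      then show ?thesis
        using Schwarz_Lemma(2)[OF hol w0 lt z] no_rotation(2) g0 by auto
    next
      case False
      have "norm z * norm (g z) < norm z * 1"
        using Schwarz_Lemma(1)[OF hol w0 lt z] no_rotation(1) z False wg[OF z]
        by (auto simp: norm_mult order_le_less)
      then show ?thesis
        using False by (simp add: mult_less_cancel_left)
    qed
    then have "norm (deriv g 0) \<le> 1 - (norm (g 0))^2"
      by (rule Schwarz_Pick_at_0[OF holg])
    then show ?thesis
      using taylor_coeffs_of_times_z[OF holg wg] by simp
  qed
qed

lemma norm_diff_one_less_norm_add_one:
  fixes p :: complex
  assumes "0 < Re p"
  shows "norm (p - 1) < norm (p + 1)"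
proof -
  have "(norm (p - 1))^2 < (norm (p + 1))^2"
    using assms unfolding cmod_power2 by (simp add: power2_eq_square algebra_simps)
  then show ?thesis
    by (simp add: power2_less_imp_less)
qed

lemma Re_cayley_pos:
  fixes w :: complex
  assumes "norm w < 1"
  shows "0 < Re ((1 + w) / (1 - w))"
proof -
  have "(Re w)^2 + (Im w)^2 < 1"
    using assms by (simp add: abs_square_less_1 flip: cmod_power2)
  then have num: "0 < (1 + Re w) * (1 - Re w) + Im w * (- Im w)"
    by (simp add: power2_eq_square algebra_simps)
  have "w \<noteq> 1"
    using assms by auto
  then have "0 < (Re (1 - w))^2 + (Im (1 - w))^2"
    by (simp add: complex_eq_iff sum_power2_gt_zero_iff)
  with num show ?thesis
    unfolding Re_divide cmod_power2 by (intro divide_pos_pos) simp_all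
qed

definition schwarz_of :: "(complex \<Rightarrow> complex) \<Rightarrow> complex \<Rightarrow> complex" where
  "schwarz_of f z = (deriv f z - 1) / (deriv f z + 1)"

lemma classR_deriv_add_one_nonzero:
  assumes "classR f" "z \<in> ball 0 1"
  shows "deriv f z + 1 \<noteq> 0"
proof -
  have "0 < Re (deriv f z)"
    using assms unfolding classR_def by blast
  then have "Re (deriv f z + 1) \<noteq> Re 0"
    by simp
  then show ?thesis
    by metis
qed

lemma classR_schwarz_function:
  assumes "classR f"
  shows "schwarz_function (schwarz_of f)"
  unfolding schwarz_function_def
proof (intro conjI ballI)
  have "deriv f holomorphic_on ball 0 1"
    using assms by (intro holomorphic_deriv) (auto simp: classR_def)
  then show "schwarz_of f holomorphic_on ball 0 1"
    unfolding schwarz_of_def[abs_def] using classR_deriv_add_one_nonzero[OF assms]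
    by (auto intro!: holomorphic_intros)
  show "schwarz_of f 0 = 0"
    using assms by (simp add: classR_def schwarz_of_def)
  fix z :: complex
  assume "z \<in> ball 0 1"
  then show "norm (schwarz_of f z) < 1"
    using assms norm_diff_one_less_norm_add_one[of "deriv f z"] classR_deriv_add_one_nonzero[OF assms]
    by (simp add: classR_def schwarz_of_def norm_divide divide_less_eq_1)
qed

lemma classR_taylor_coeffs:
  assumes "classR f"
  shows "taylor_coeff f 2 = taylor_coeff (schwarz_of f) 1"
    and "taylor_coeff f 3 = 2 * (taylor_coeff (schwarz_of f) 2 + (taylor_coeff (schwarz_of f) 1)^2) / 3"
proof -
  have holf: "f holomorphic_on ball 0 1" and d1: "deriv f 0 = 1"
    using assms by (auto simp: classR_def)
  have holw: "schwarz_of f holomorphic_on ball 0 1"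
    using classR_schwarz_function[OF assms] by (simp add: schwarz_function_def)
  define F where "F = fps_expansion f 0"
  define W where "W = fps_expansion (schwarz_of f) 0"
  have hF: "f has_fps_expansion F"
    unfolding F_def using holf by (intro has_fps_expansion_fps_expansion) auto
  have hW: "schwarz_of f has_fps_expansion W"
    unfolding W_def using holw by (intro has_fps_expansion_fps_expansion) auto
  have hP: "deriv f has_fps_expansion fps_deriv F"
    by (rule has_fps_expansion_deriv[OF hF])
  have ev: "eventually (\<lambda>z. schwarz_of f z * (deriv f z + 1) = deriv f z - 1) (nhds 0)"
    by (rule eventually_nhds_0_of_unit_ball)
       (simp add: schwarz_of_def classR_deriv_add_one_nonzero[OF assms])
  have "(\<lambda>z. schwarz_of f z * (deriv f z + 1)) has_fps_expansion W * (fps_deriv F + 1)"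
    by (intro fps_expansion_intros hW hP)
  moreover have "(\<lambda>z. deriv f z - 1) has_fps_expansion fps_deriv F - 1"
    by (intro fps_expansion_intros hP)
  then have "(\<lambda>z. schwarz_of f z * (deriv f z + 1)) has_fps_expansion fps_deriv F - 1"
    using has_fps_expansion_cong[OF ev refl] by blast
  ultimately have "W * (fps_deriv F + 1) = fps_deriv F - 1"
    by (rule fps_expansion_unique_complex)
  moreover have "fps_nth (fps_deriv F) 0 = 1"
    using taylor_coeff_eq_fps_nth[OF hP, of 0] d1 by simp
  ultimately have "fps_nth (fps_deriv F) 1 = 2 * fps_nth W 1"
    "fps_nth (fps_deriv F) 2 = 2 * fps_nth W 2 + 2 * (fps_nth W 1)^2"
    by (rule fps_cayley_coeffs)+
  moreover have "fps_nth (fps_deriv F) 1 = 2 * taylor_coeff f 2" "fps_nth (fps_deriv F) 2 = 3 * taylor_coeff f 3"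
    by (simp_all add: taylor_coeff_eq_fps_nth[OF hF] numeral_2_eq_2 numeral_3_eq_3)
  ultimately show "taylor_coeff f 2 = taylor_coeff (schwarz_of f) 1"
    "taylor_coeff f 3 = 2 * (taylor_coeff (schwarz_of f) 2 + (taylor_coeff (schwarz_of f) 1)^2) / 3"
    by (simp_all add: taylor_coeff_eq_fps_nth[OF hW])
qed

lemma schwarz_function_imp_classR:
  assumes "schwarz_function w"
  obtains f where "classR f" "\<And>z. z \<in> ball 0 1 \<Longrightarrow> schwarz_of f z = w z"
proof -
  have hol: "w holomorphic_on ball 0 1" and w0: "w 0 = 0" and lt: "\<And>z. z \<in> ball 0 1 \<Longrightarrow> norm (w z) < 1"
    using assms by (auto simp: schwarz_function_def)
  have nz: "1 - w z \<noteq> 0" if "z \<in> ball 0 1" for z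
    using lt[OF that] by auto
  define p where "p z = (1 + w z) / (1 - w z)" for z
  have "p holomorphic_on ball 0 1"
    unfolding p_def using hol nz by (auto intro!: holomorphic_intros)
  then obtain g where g: "\<And>z. z \<in> ball 0 1 \<Longrightarrow> (g has_field_derivative p z) (at z within ball 0 1)"
    using holomorphic_convex_primitive'[OF convex_ball open_ball] by blast
  define f where "f z = g z - g 0" for z
  have df: "(f has_field_derivative p z) (at z)" if "z \<in> ball 0 1" for z
    using g[OF that] at_within_open[OF that open_ball] unfolding f_def[abs_def]
    by (auto intro!: derivative_eq_intros)
  have deq: "deriv f z = p z" if "z \<in> ball 0 1" for z
    using df[OF that] by (rule DERIV_imp_deriv)
  show ?thesis
  proof
    show "classR f"
      unfolding classR_def
    proof (intro conjI ballI)
      show "f holomorphic_on ball 0 1"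
        unfolding holomorphic_on_open[OF open_ball] using df by blast
      show "f 0 = 0" "deriv f 0 = 1"
        using deq[of 0] by (simp_all add: f_def p_def w0)
      show "0 < Re (deriv f z)" if "z \<in> ball 0 1" for z
        using deq[OF that] Re_cayley_pos[OF lt[OF that]] by (simp add: p_def)
    qed
    show "schwarz_of f z = w z" if "z \<in> ball 0 1" for z
    proof -
      have "deriv f z + 1 = 2 / (1 - w z)" "deriv f z - 1 = 2 * w z / (1 - w z)"
        using deq[OF that] nz[OF that] by (simp_all add: p_def field_simps)
      then show ?thesis
        using nz[OF that] by (simp add: schwarz_of_def)
    qed
  qed
qed

definition schwarz_gap :: "complex \<Rightarrow> complex \<Rightarrow> real" where
  "schwarz_gap c1 c2 = norm (4 * c1^2 - 2 * c2) / 3 - norm c1"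

lemma classR_inverse_coeff_gap:
  assumes "classR f"
  shows "cmod (invA3 f) - cmod (invA2 f) =
           schwarz_gap (taylor_coeff (schwarz_of f) 1) (taylor_coeff (schwarz_of f) 2)"
proof -
  have A3: "invA3 f = (4 * (taylor_coeff (schwarz_of f) 1)^2 - 2 * taylor_coeff (schwarz_of f) 2) / 3"
    by (simp add: invA3_def classR_taylor_coeffs[OF assms] field_simps)
  have "cmod (invA3 f) = norm (4 * (taylor_coeff (schwarz_of f) 1)^2 - 2 * taylor_coeff (schwarz_of f) 2) / 3"
    unfolding A3 by (simp add: norm_divide)
  then show ?thesis
    by (simp add: schwarz_gap_def invA2_def classR_taylor_coeffs[OF assms])
qed

lemma schwarz_gap_le:
  assumes "norm c2 \<le> 1 - (norm c1)^2"
  shows "schwarz_gap c1 c2 \<le> 2 / 3"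
proof -
  have "norm (4 * c1^2 - 2 * c2) \<le> 4 * (norm c1)^2 + 2 * norm c2"
    using norm_triangle_ineq4[of "4 * c1^2" "2 * c2"] by (simp add: norm_mult norm_power)
  moreover have "(norm c1)^2 \<le> 1"
    using assms norm_ge_zero[of c2] by linarith
  then have "norm c1 \<le> 1"
    by (simp add: abs_square_le_1)
  then have "(norm c1)^2 \<le> norm c1"
    by (simp add: power2_eq_square mult_left_le_one_le)
  ultimately show ?thesis
    unfolding schwarz_gap_def using assms norm_ge_zero[of c1] by linarith
qed

lemma schwarz_gap_ge:
  assumes "norm c2 \<le> 1 - (norm c1)^2"
  shows "- 1 / sqrt 3 \<le> schwarz_gap c1 c2"
proof -
  define s where "s = 1 / sqrt 3"
  define t where "t = norm c1"
  have "s * s = 1 / 3"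
    by (simp add: s_def)
  have "sqrt 3 < 4"
    by (rule real_less_lsqrt) auto
  then have "1 / 4 < s"
    by (simp add: s_def divide_simps)
  have "norm (4 * c1^2 - 2 * c2) \<ge> 4 * t^2 - 2 * norm c2"
    using norm_triangle_ineq2[of "4 * c1^2" "2 * c2"] by (simp add: t_def norm_mult norm_power)
  then have lower: "norm (4 * c1^2 - 2 * c2) / 3 \<ge> 2 * t^2 - 2 / 3"
    using assms by (simp add: t_def)
  have "t - s \<le> norm (4 * c1^2 - 2 * c2) / 3"
  proof (cases "t \<le> s")
    case True
    then show ?thesis
      using norm_ge_zero[of "4 * c1^2 - 2 * c2"] by linarith
  next
    case False
    \<comment> \<open>Then \<open>2t\<^sup>2 - 2/3 - t + s = (t - s)(2t + 2s - 1) \<ge> 0\<close>, as \<open>s > 1/4\<close>.\<close>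
    with \<open>1 / 4 < s\<close> have "0 \<le> (t - s) * (2 * t + 2 * s - 1)"
      by (intro mult_nonneg_nonneg) (auto simp: t_def)
    with lower \<open>s * s = 1 / 3\<close> show ?thesis
      by (simp add: algebra_simps power2_eq_square)
  qed
  then show ?thesis
    by (simp add: schwarz_gap_def s_def t_def)
qed

lemma classR_inverse_coeff_gap_bounds:
  assumes "classR f"
  shows "- 1 / sqrt 3 \<le> cmod (invA3 f) - cmod (invA2 f)" and "cmod (invA3 f) - cmod (invA2 f) \<le> 2 / 3"
  using schwarz_function_coeff_bound[OF classR_schwarz_function[OF assms]]
  unfolding classR_inverse_coeff_gap[OF assms] by (rule schwarz_gap_ge, rule schwarz_gap_le)

lemma schwarz_function_inverse_coeff_gap:
  assumes "schwarz_function w"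
  obtains f where "classR f" "cmod (invA3 f) - cmod (invA2 f) = schwarz_gap (taylor_coeff w 1) (taylor_coeff w 2)"
proof -
  obtain f where f: "classR f" "\<And>z. z \<in> ball 0 1 \<Longrightarrow> schwarz_of f z = w z"
    using schwarz_function_imp_classR[OF assms] by blast
  have "eventually (\<lambda>z. schwarz_of f z = w z) (nhds 0)"
    by (rule eventually_nhds_0_of_unit_ball) (simp add: f(2))
  then have "taylor_coeff (schwarz_of f) n = taylor_coeff w n" for n
    by (rule taylor_coeff_cong)
  then show ?thesis
    using that f(1) classR_inverse_coeff_gap[OF f(1)] by simp
qed

lemma inverse_coeff_gap_max_attained:
  obtains f where "classR f" "cmod (invA3 f) - cmod (invA2 f) = 2 / 3"
proof -
  have "schwarz_function (\<lambda>z. z^2)"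
    unfolding schwarz_function_def
  proof (intro conjI ballI)
    show "(\<lambda>z. z^2) holomorphic_on ball 0 1"
      by (intro holomorphic_intros)
    show "norm (z^2) < 1" if "z \<in> ball 0 1" for z :: complex
      using that by (simp add: norm_power abs_square_less_1)
  qed simp
  then obtain f where "classR f"
    "cmod (invA3 f) - cmod (invA2 f) = schwarz_gap (taylor_coeff (\<lambda>z. z^2) 1) (taylor_coeff (\<lambda>z. z^2) 2)"
    by (rule schwarz_function_inverse_coeff_gap)
  moreover have "taylor_coeff (\<lambda>z. z^2) n = fps_nth (fps_X ^ 2) n" for n
    by (rule taylor_coeff_eq_fps_nth[OF has_fps_expansion_fps_X_power])
  then have "taylor_coeff (\<lambda>z. z^2) 1 = 0" "taylor_coeff (\<lambda>z. z^2) 2 = 1"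
    by (simp_all add: fps_X_power_iff)
  ultimately show ?thesis
    using that by (simp add: schwarz_gap_def)
qed

lemma inverse_coeff_gap_min_attained:
  obtains f where "classR f" "cmod (invA3 f) - cmod (invA2 f) = - 1 / sqrt 3"
proof -
  define c where "c = complex_of_real (1 / sqrt 3)"
  have c: "norm c = 1 / sqrt 3" "cnj c = c" "c^2 = 1 / 3"
    unfolding c_def norm_of_real by (simp_all add: power_divide flip: of_real_power)
  then have "norm (- c) < 1"
    by simp
  note M = Moebius_function_holomorphic[OF this, of 0] Moebius_function_norm_lt_1[OF this, of _ 0]
  define w where "w z = z * Moebius_function 0 (- c) z" for z
  have "schwarz_function w"
    unfolding schwarz_function_def
  proof (intro conjI ballI)
    show "w holomorphic_on ball 0 1"
      unfolding w_def[abs_def] using M(1) by (intro holomorphic_intros)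
    show "norm (w z) < 1" if "z \<in> ball 0 1" for z
      using norm_mult_less[of z 1 "Moebius_function 0 (- c) z" 1] M(2)[of z] that by (simp add: w_def)
  qed (simp add: w_def)
  then obtain f where "classR f" "cmod (invA3 f) - cmod (invA2 f) = schwarz_gap (taylor_coeff w 1) (taylor_coeff w 2)"
    by (rule schwarz_function_inverse_coeff_gap)
  moreover have "taylor_coeff w 1 = c" "taylor_coeff w 2 = 1 - c^2"
    using taylor_coeffs_of_times_z[OF M(1), of w] c(2)
      DERIV_imp_deriv[OF Moebius_function_has_field_derivative[OF \<open>norm (- c) < 1\<close>, of 0]]
    by (simp_all add: w_def Moebius_function_of_zero power2_eq_square)
  moreover have "schwarz_gap c (1 - c^2) = - 1 / sqrt 3"
    unfolding schwarz_gap_def c(1) by (simp add: c(3))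
  ultimately have "cmod (invA3 f) - cmod (invA2 f) = - 1 / sqrt 3"
    by simp
  with \<open>classR f\<close> show ?thesis
    by (rule that)
qed

theorem mainTheorem10:
  shows "(\<forall>f. classR f \<longrightarrow>
            - 1 / sqrt 3 \<le> cmod (invA3 f) - cmod (invA2 f) \<and>
            cmod (invA3 f) - cmod (invA2 f) \<le> 2 / 3)
       \<and> (SUP f\<in>{f. classR f}. cmod (invA3 f) - cmod (invA2 f)) = 2 / 3
       \<and> (INF f\<in>{f. classR f}. cmod (invA3 f) - cmod (invA2 f)) = - 1 / sqrt 3"
proof (intro conjI allI impI)
  note bounds = classR_inverse_coeff_gap_bounds
  show "- 1 / sqrt 3 \<le> cmod (invA3 f) - cmod (invA2 f)" "cmod (invA3 f) - cmod (invA2 f) \<le> 2 / 3"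
    if "classR f" for f
    using bounds[OF that] by auto
  obtain f_max where "classR f_max" "cmod (invA3 f_max) - cmod (invA2 f_max) = 2 / 3"
    by (rule inverse_coeff_gap_max_attained)
  then show "(SUP f\<in>{f. classR f}. cmod (invA3 f) - cmod (invA2 f)) = 2 / 3"
    by (intro cSup_eq_maximum) (auto intro!: image_eqI[of _ _ f_max] dest: bounds)
  obtain f_min where "classR f_min" "cmod (invA3 f_min) - cmod (invA2 f_min) = - 1 / sqrt 3"
    by (rule inverse_coeff_gap_min_attained)
  then show "(INF f\<in>{f. classR f}. cmod (invA3 f) - cmod (invA2 f)) = - 1 / sqrt 3"
    by (intro cInf_eq_minimum) (auto intro!: image_eqI[of _ _ f_min] dest: bounds)
qed

end
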